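(* Let $G$ be a finite simple graph with $n$ vertices and minimum degree $\delta$, and let $k$ be a positive integer. Then $\gamma_{gr}^{L,k}(G) \leq n-\delta+k$.
   Context: For a vertex $v$, $N(v)$ denotes its open neighborhood and $N[v]=N(v)\cup\{v\}$ its closed neighborhood. A sequence $S=(v_1,\ldots,v_m)$ of distinct vertices of $G$ is a $k$-$L$-sequence if for each $i\in[m]$ there exists a vertex $u_i\in N[v_i]$ such that the number of indices $j<i$ with $u_i\in N(v_j)$ is less than $k$. The $k$-$L$-Grundy domination number $\gamma_{gr}^{L,k}(G)$ is the maximum length of a $k$-$L$-sequence of $G$. *)

theory Defs
  imports Main
begin

definition simple_graph :: "'a set \<Rightarrow> ('a \<Rightarrow> 'a \<Rightarrow> bool) \<Rightarrow> bool" where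
  "simple_graph V E \<longleftrightarrow> finite V \<and> (\<forall>u v. E u v \<longrightarrow> E v u) \<and> (\<forall>v. \<not> E v v)
     \<and> (\<forall>u v. E u v \<longrightarrow> u \<in> V \<and> v \<in> V)"

definition open_nbhd :: "'a set \<Rightarrow> ('a \<Rightarrow> 'a \<Rightarrow> bool) \<Rightarrow> 'a \<Rightarrow> 'a set" where
  "open_nbhd V E v = {u \<in> V. E v u}"

definition closed_nbhd :: "'a set \<Rightarrow> ('a \<Rightarrow> 'a \<Rightarrow> bool) \<Rightarrow> 'a \<Rightarrow> 'a set" where
  "closed_nbhd V E v = insert v (open_nbhd V E v)"

definition degree :: "'a set \<Rightarrow> ('a \<Rightarrow> 'a \<Rightarrow> bool) \<Rightarrow> 'a \<Rightarrow> nat" where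
  "degree V E v = card (open_nbhd V E v)"

definition min_degree :: "'a set \<Rightarrow> ('a \<Rightarrow> 'a \<Rightarrow> bool) \<Rightarrow> nat" where
  "min_degree V E = Min (degree V E ` V)"

definition k_L_sequence :: "'a set \<Rightarrow> ('a \<Rightarrow> 'a \<Rightarrow> bool) \<Rightarrow> nat \<Rightarrow> 'a list \<Rightarrow> bool" where
  "k_L_sequence V E k S \<longleftrightarrow> distinct S \<and> set S \<subseteq> V \<and>
     (\<forall>i < length S. \<exists>u \<in> closed_nbhd V E (S ! i).
        card {j. j < i \<and> u \<in> open_nbhd V E (S ! j)} < k)"

definition k_L_grundy :: "'a set \<Rightarrow> ('a \<Rightarrow> 'a \<Rightarrow> bool) \<Rightarrow> nat \<Rightarrow> nat" where
  "k_L_grundy V E k = Max (length ` {S. k_L_sequence V E k S})"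

end

theory Submission
  imports Defs
begin

text \<open>Let \<open>v\<^sub>m\<close> be the last vertex of a k-L-sequence and \<open>u \<in> N[v\<^sub>m]\<close> its witness.
  Fewer than \<open>k\<close> of the \<open>m - 1\<close> earlier vertices lie in \<open>N(u)\<close>, so at least
  \<open>\<delta> - k + 1\<close> neighbours of \<open>u\<close> avoid them, and these all lie among the remaining
  \<open>n - m + 1\<close> vertices; hence \<open>m \<le> n - \<delta> + k\<close>.\<close>

lemma open_nbhd_sym:
  assumes "simple_graph V E"
  shows "u \<in> open_nbhd V E v \<longleftrightarrow> v \<in> open_nbhd V E u"
  using assms by (auto simp: simple_graph_def open_nbhd_def)

lemma closed_nbhd_subset:
  assumes "simple_graph V E" and "v \<in> V"
  shows "closed_nbhd V E v \<subseteq> V"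
  using assms by (auto simp: closed_nbhd_def open_nbhd_def)

lemma min_degree_le_degree:
  assumes "finite V" and "v \<in> V"
  shows "min_degree V E \<le> degree V E v"
  using assms unfolding min_degree_def by (intro Min_le) auto

lemma card_prefix_indices_in:
  assumes "distinct xs" and "i \<le> length xs"
  shows "card {j. j < i \<and> xs ! j \<in> A} = card (set (take i xs) \<inter> A)"
proof -
  have "set (take i xs) \<inter> A = (!) xs ` {j. j < i \<and> xs ! j \<in> A}"
    using assms(2) by (force simp: in_set_conv_nth)
  moreover have "inj_on ((!) xs) {j. j < i \<and> xs ! j \<in> A}"
    using assms by (auto simp: inj_on_def nth_eq_iff_index_eq)
  ultimately show ?thesis
    by (simp add: card_image)
qed

lemma card_add_card_less:
  assumes "finite V" and "A \<subseteq> V" and "B \<subseteq> V" and "card (A \<inter> B) < k"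
  shows "card A + card B < card V + k"
proof -
  have "card A + card B = card (A \<union> B) + card (A \<inter> B)"
    using assms by (intro card_Un_Int) (auto intro: finite_subset)
  moreover have "card (A \<union> B) \<le> card V"
    using assms by (intro card_mono) auto
  ultimately show ?thesis
    using assms(4) by linarith
qed

lemma length_k_L_sequence_le:
  assumes G: "simple_graph V E" and S: "k_L_sequence V E k S"
  shows "length S \<le> card V - min_degree V E + k"
proof (cases "S = []")
  case False
  define i where "i = length S - 1"
  have i: "i < length S"
    using False by (simp add: i_def)
  have fin: "finite V"
    using G by (simp add: simple_graph_def)
  have dist: "distinct S" and SV: "set S \<subseteq> V"
    using S by (auto simp: k_L_sequence_def)
  obtain u where u: "u \<in> closed_nbhd V E (S ! i)"
    and few: "card {j. j < i \<and> u \<in> open_nbhd V E (S ! j)} < k"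
    using S i unfolding k_L_sequence_def by blast
  have uV: "u \<in> V"
    using closed_nbhd_subset[OF G] u SV i nth_mem by blast
  define A where "A = open_nbhd V E u"
  define B where "B = set (take i S)"
  have AV: "A \<subseteq> V" and BV: "B \<subseteq> V"
    using SV set_take_subset by (fastforce simp: A_def B_def open_nbhd_def)+
  have "card (A \<inter> B) < k"
    using few card_prefix_indices_in[OF dist, of i A] i
    by (simp add: A_def B_def Int_commute open_nbhd_sym[OF G])
  then have "card A + card B < card V + k"
    using card_add_card_less[OF fin AV BV] by blast
  moreover have "card B = i"
    using dist i by (simp add: B_def distinct_card)
  moreover have "min_degree V E \<le> card A"
    using min_degree_le_degree[OF fin uV] by (simp add: A_def degree_def)
  moreover have "card A \<le> card V"
    using AV fin by (simp add: card_mono)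
  ultimately show ?thesis
    using i_def i by linarith
qed simp

theorem mainTheorem1:
  fixes V :: "'a set" and E :: "'a \<Rightarrow> 'a \<Rightarrow> bool" and k :: nat
  assumes "simple_graph V E" and "V \<noteq> {}" and "k \<ge> 1"
  shows "k_L_grundy V E k \<le> card V - min_degree V E + k"
proof -
  \<comment> \<open>Only \<open>simple_graph V E\<close> is needed: the empty list witnesses that the
    maximum is taken over a nonempty set, whatever \<open>V\<close> and \<open>k\<close> are.\<close>
  let ?lengths = "length ` {S. k_L_sequence V E k S}"
  have bound: "?lengths \<subseteq> {..card V - min_degree V E + k}"
    using length_k_L_sequence_le[OF assms(1)] by auto
  have "[] \<in> {S. k_L_sequence V E k S}"
    by (simp add: k_L_sequence_def)
  then have "?lengths \<noteq> {}"
    by blast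
  moreover have "finite ?lengths"
    using bound finite_subset by blast
  ultimately show ?thesis
    using bound unfolding k_L_grundy_def by (auto simp: Max_le_iff)
qed

end
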